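(* Let $(X_t, t\ge 0)$ be a zero-mean Gaussian process with $X_0=0$ and covariance function $R(s,t)=E(X_sX_t)$. Assume that $R$ is continuous, that the partial derivative $\frac{\partial R}{\partial s}(s,t)$ exists in the region $\{(s,t): s>0,\ t>0,\ s\neq t\}$, and that for every $T>0$, $$\sup_{t\in[0,T]}\int_0^T\Big|\frac{\partial R}{\partial s}(s,t)\Big|\,ds<\infty.$$ Fix $\lambda>0$, set $V_t=R(t,t)$, $M_t=\exp(\lambda X_t-\tfrac12\lambda^2V_t)$ and $\delta_tM=\frac1\lambda(M_t-1)$. Then for any $t>0$, any $n\ge1$, any times $t_1,\dots,t_n>0$ and any $f\in C_b^\infty(\mathbb{R}^n)$, the random variable $F=f(X_{t_1},\dots,X_{t_n})$ satisfies $$E(F\,\delta_tM)=E\Big(\sum_{i=1}^n\frac{\partial f}{\partial x_i}(X_{t_1},\dots,X_{t_n})\int_0^tM_s\,\frac{\partial R}{\partial s}(s,t_i)\,ds\Big).$$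
   Context: $C_b^\infty(\mathbb{R}^n)$ denotes the smooth functions on $\mathbb{R}^n$ which are bounded together with all their partial derivatives. $\frac{\partial R}{\partial s}(s,t)$ denotes the partial derivative of $R$ with respect to its first argument. *)

theory Defs
  imports "HOL-Probability.Probability"
begin

definition centered_gaussian_rv :: "'a measure \<Rightarrow> ('a \<Rightarrow> real) \<Rightarrow> bool" where
  "centered_gaussian_rv M Y \<longleftrightarrow>
     Y \<in> borel_measurable M \<and>
     ((AE \<omega> in M. Y \<omega> = 0) \<or> (\<exists>\<sigma>>0. distributed M lborel Y (normal_density 0 \<sigma>)))"

definition centered_gaussian_process :: "'a measure \<Rightarrow> real set \<Rightarrow> (real \<Rightarrow> 'a \<Rightarrow> real) \<Rightarrow> bool" where
  "centered_gaussian_process M I X \<longleftrightarrow>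
     (\<forall>t\<in>I. X t \<in> borel_measurable M) \<and>
     (\<forall>F c. finite F \<longrightarrow> F \<subseteq> I \<longrightarrow>
        centered_gaussian_rv M (\<lambda>\<omega>. \<Sum>t\<in>F. c t * X t \<omega>))"

definition pd :: "'n::finite \<Rightarrow> (real^'n \<Rightarrow> real) \<Rightarrow> real^'n \<Rightarrow> real" where
  "pd i g x = deriv (\<lambda>h. g (x + h *\<^sub>R axis i 1)) 0"

inductive_set iterated_partials :: "(real^'n::finite \<Rightarrow> real) \<Rightarrow> (real^'n \<Rightarrow> real) set"
  for f where
    base: "f \<in> iterated_partials f"
  | step: "g \<in> iterated_partials f \<Longrightarrow> pd i g \<in> iterated_partials f"

definition Cb_inf :: "(real^'n::finite \<Rightarrow> real) \<Rightarrow> bool" where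
  "Cb_inf f \<longleftrightarrow> (\<forall>g\<in>iterated_partials f. (\<forall>x. g differentiable (at x)) \<and> bounded (range g))"

end

theory Submission
  imports Defs
begin

(* Gaussian integration by parts through the Cameron-Martin formula. For s >= 0, weighting the
   probability by M_s = exp(lam X_s - lam^2 R(s,s)/2) shifts the law of Y = (X_t1, ..., X_tn) by
   lam c(s), where c(s) = (R(t_i, s))_i is the covariance of Y with X_s. Hence E(F M_t) = E f(Y + lam c(t)),
   and the fundamental theorem of calculus along s |-> Y + lam c(s) gives
     f(Y + lam c(t)) - f(Y) = lam * int_0^t sum_i d_i f(Y + lam c(s)) dR/ds(s, t_i) ds.
   Taking expectations, exchanging them with the ds-integral (Fubini) and undoing the shift inside
   the integral by Cameron-Martin once more yields the formula.
   The Cameron-Martin formula is reduced to a comparison of exponential moments: a finite Borel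
   measure all of whose exponential moments are finite is determined by them. On the real line this
   follows from Levy's uniqueness theorem, since such a measure's characteristic function is the sum
   of its moment series; in several dimensions one slices by coordinate half-spaces, applying the
   one-dimensional case to exponentially tilted marginals. *)

section \<open>Exponential moments on the real line\<close>

lemma sum_power_div_fact_le_exp:
  fixes y :: real
  assumes "0 \<le> y" "finite I"
  shows "(\<Sum>k\<in>I. y ^ k / fact k) \<le> exp y"
proof -
  have "(\<lambda>k. y ^ k / fact k) sums exp y"
    using exp_converges[of y] by (simp add: divide_inverse mult.commute)
  then show ?thesis
    using sum_le_suminf[of "\<lambda>k. y ^ k / fact k" I] assms by (simp add: sums_iff)
qed

lemma abs_power_le_fact_mult_exp: "\<bar>x\<bar> ^ m \<le> fact m * exp \<bar>x\<bar>" for x :: real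
  using sum_power_div_fact_le_exp[of "\<bar>x\<bar>" "{m}"] by (simp add: field_simps)

lemma exp_mult_abs_le: "exp (b * x + d * \<bar>x\<bar>) \<le> exp ((b + d) * x) + exp ((b - d) * x)"
  for b d x :: real
  by (cases "x \<ge> 0") (simp_all add: algebra_simps add_pos_nonneg add_nonneg_pos)

lemma exp_difference_quotient_bound:
  fixes b h x :: real
  assumes "h \<noteq> 0" "\<bar>h\<bar> \<le> 1"
  shows "\<bar>(exp ((b + h) * x) - exp (b * x)) / h - x * exp (b * x)\<bar> \<le> \<bar>h\<bar> * x\<^sup>2 * exp (b * x + \<bar>x\<bar>)"
proof -
  have "\<bar>exp (h * x) - 1 - h * x\<bar> \<le> exp \<bar>h * x\<bar> * (h * x)\<^sup>2"
    using Taylor_exp_field[of "h * x" 1] by (simp add: power2_eq_square diff_diff_eq)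
  also have "\<dots> \<le> exp \<bar>x\<bar> * (h * x)\<^sup>2"
    using assms by (intro mult_right_mono) (auto simp: abs_mult mult_left_le_one_le)
  finally have taylor: "\<bar>exp (h * x) - 1 - h * x\<bar> \<le> exp \<bar>x\<bar> * (h * x)\<^sup>2" .
  have "(exp ((b + h) * x) - exp (b * x)) / h - x * exp (b * x) = exp (b * x) * (exp (h * x) - 1 - h * x) / h"
    using assms by (simp add: field_simps exp_add distrib_right)
  then have "\<bar>(exp ((b + h) * x) - exp (b * x)) / h - x * exp (b * x)\<bar>
      = exp (b * x) * \<bar>exp (h * x) - 1 - h * x\<bar> / \<bar>h\<bar>"
    by (simp add: abs_mult)
  also have "\<dots> \<le> exp (b * x) * (exp \<bar>x\<bar> * (h * x)\<^sup>2) / \<bar>h\<bar>"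
    by (intro divide_right_mono mult_left_mono taylor) auto
  also have "\<dots> = \<bar>h\<bar> * x\<^sup>2 * exp (b * x + \<bar>x\<bar>)"
    using assms by (simp add: field_simps power2_eq_square exp_add)
  finally show ?thesis .
qed

(* The k-th derivative of the moment generating function b |-> LINT x|N. exp (b * x). *)
definition tilted_moment :: "real measure \<Rightarrow> nat \<Rightarrow> real \<Rightarrow> real" where
  "tilted_moment N k b = (\<integral>x. x ^ k * exp (b * x) \<partial>N)"

locale exp_moments =
  fixes M :: "'a::euclidean_space measure"
  assumes finite_measure: "finite_measure M"
    and sets_eq_borel [measurable_cong]: "sets M = sets borel"
    and integrable_exp: "\<And>a. integrable M (\<lambda>x. exp (a \<bullet> x))"

lemma (in exp_moments) emeasure_space_eq_integral_exp_zero: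
  "emeasure M (space M) = ennreal (\<integral>x. exp (0 \<bullet> x) \<partial>M)"
  using finite_measure by (simp add: finite_measure.emeasure_eq_measure)

context
  fixes M :: "real measure"
  assumes exp_moments: "exp_moments M"
begin

interpretation exp_moments M
  by (fact exp_moments)

lemma integrable_exp_mult: "integrable M (\<lambda>x. exp (b * x))"
  using integrable_exp[of b] by simp

lemma integrable_abs_power_exp:
  assumes "0 \<le> c"
  shows "integrable M (\<lambda>x. \<bar>x\<bar> ^ m * exp (b * x + c * \<bar>x\<bar>))"
proof (rule Bochner_Integration.integrable_bound)
  show "integrable M (\<lambda>x. fact m * (exp ((b + (c + 1)) * x) + exp ((b - (c + 1)) * x)))"
    by (intro integrable_mult_right Bochner_Integration.integrable_add integrable_exp_mult)
  have "\<bar>x\<bar> ^ m * exp (b * x + c * \<bar>x\<bar>) \<le> fact m * (exp ((b + (c + 1)) * x) + exp ((b - (c + 1)) * x))"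
    for x
  proof -
    have "\<bar>x\<bar> ^ m * exp (b * x + c * \<bar>x\<bar>) \<le> fact m * exp \<bar>x\<bar> * exp (b * x + c * \<bar>x\<bar>)"
      by (intro mult_right_mono abs_power_le_fact_mult_exp) simp
    also have "\<dots> = fact m * exp (b * x + (c + 1) * \<bar>x\<bar>)"
      by (simp add: exp_add[symmetric] algebra_simps)
    also have "\<dots> \<le> fact m * (exp ((b + (c + 1)) * x) + exp ((b - (c + 1)) * x))"
      by (intro mult_left_mono exp_mult_abs_le) simp
    finally show ?thesis .
  qed
  then show "AE x in M. norm (\<bar>x\<bar> ^ m * exp (b * x + c * \<bar>x\<bar>))
      \<le> norm (fact m * (exp ((b + (c + 1)) * x) + exp ((b - (c + 1)) * x)))"
    by (intro AE_I2) (simp add: abs_mult)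
qed measurable

lemma integrable_power_exp: "integrable M (\<lambda>x. x ^ m * exp (b * x))"
  by (rule Bochner_Integration.integrable_bound[OF integrable_abs_power_exp[of 0 m b]])
     (auto simp: abs_mult power_abs)

lemma tilted_moment_difference_quotient_bound:
  assumes "h \<noteq> 0" "\<bar>h\<bar> \<le> 1"
  shows "\<bar>(tilted_moment M k (b + h) - tilted_moment M k b) / h - tilted_moment M (Suc k) b\<bar>
    \<le> \<bar>h\<bar> * (\<integral>x. \<bar>x\<bar> ^ (k + 2) * exp (b * x + 1 * \<bar>x\<bar>) \<partial>M)"
proof -
  note integrable = integrable_power_exp[of k "b + h"] integrable_power_exp[of k b]
    integrable_power_exp[of "Suc k" b]
  have "(tilted_moment M k (b + h) - tilted_moment M k b) / h - tilted_moment M (Suc k) b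
      = (\<integral>x. (x ^ k * exp ((b + h) * x) - x ^ k * exp (b * x)) / h - x ^ Suc k * exp (b * x) \<partial>M)"
    unfolding tilted_moment_def using integrable by simp
  moreover have "\<bar>\<integral>x. (x ^ k * exp ((b + h) * x) - x ^ k * exp (b * x)) / h - x ^ Suc k * exp (b * x) \<partial>M\<bar>
      \<le> (\<integral>x. \<bar>h\<bar> * (\<bar>x\<bar> ^ (k + 2) * exp (b * x + 1 * \<bar>x\<bar>)) \<partial>M)"
  proof (rule integral_abs_bound_integral)
    show "integrable M (\<lambda>x. (x ^ k * exp ((b + h) * x) - x ^ k * exp (b * x)) / h - x ^ Suc k * exp (b * x))"
      using integrable by (intro Bochner_Integration.integrable_diff integrable_divide_zero)
    show "integrable M (\<lambda>x. \<bar>h\<bar> * (\<bar>x\<bar> ^ (k + 2) * exp (b * x + 1 * \<bar>x\<bar>)))"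
      by (intro integrable_mult_right integrable_abs_power_exp) simp
    fix x
    have "(x ^ k * exp ((b + h) * x) - x ^ k * exp (b * x)) / h - x ^ Suc k * exp (b * x)
        = x ^ k * ((exp ((b + h) * x) - exp (b * x)) / h - x * exp (b * x))"
      by (simp add: right_diff_distrib diff_divide_distrib)
    also have "\<bar>\<dots>\<bar> \<le> \<bar>x\<bar> ^ k * (\<bar>h\<bar> * x\<^sup>2 * exp (b * x + \<bar>x\<bar>))"
      unfolding abs_mult power_abs
      by (intro mult_left_mono exp_difference_quotient_bound assms) simp
    also have "\<dots> = \<bar>h\<bar> * (\<bar>x\<bar> ^ (k + 2) * exp (b * x + 1 * \<bar>x\<bar>))"
      by (simp add: power_add mult_ac power2_eq_square)
    finally show "\<bar>(x ^ k * exp ((b + h) * x) - x ^ k * exp (b * x)) / h - x ^ Suc k * exp (b * x)\<bar>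
        \<le> \<bar>h\<bar> * (\<bar>x\<bar> ^ (k + 2) * exp (b * x + 1 * \<bar>x\<bar>))" .
  qed
  ultimately show ?thesis
    by simp
qed

lemma has_real_derivative_tilted_moment:
  "(tilted_moment M k has_real_derivative tilted_moment M (Suc k) b) (at b)"
proof -
  define C where "C = (\<integral>x. \<bar>x\<bar> ^ (k + 2) * exp (b * x + 1 * \<bar>x\<bar>) \<partial>M)"
  have "((\<lambda>h. (tilted_moment M k (b + h) - tilted_moment M k b) / h - tilted_moment M (Suc k) b) \<longlongrightarrow> 0) (at 0)"
  proof (rule Lim_null_comparison)
    have "\<forall>\<^sub>F h in at 0. h \<noteq> 0 \<and> \<bar>h\<bar> \<le> (1::real)"
      by (auto simp: eventually_at intro!: exI[of _ 1])
    then show "\<forall>\<^sub>F h in at 0.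
        norm ((tilted_moment M k (b + h) - tilted_moment M k b) / h - tilted_moment M (Suc k) b) \<le> \<bar>h\<bar> * C"
      unfolding C_def real_norm_def
      by eventually_elim (blast intro: tilted_moment_difference_quotient_bound)
    show "((\<lambda>h. \<bar>h\<bar> * C) \<longlongrightarrow> 0) (at 0)"
      by (auto intro!: tendsto_eq_intros)
  qed
  then show ?thesis
    unfolding DERIV_def by (rule LIM_zero_cancel)
qed

lemma moment_series_sums_char:
  assumes "real_distribution M"
  shows "(\<lambda>k. (\<i> * t) ^ k / fact k * complex_of_real (tilted_moment M k 0)) sums char M t"
proof -
  interpret real_distribution M by fact
  define a where "a n = \<bar>t\<bar> ^ n / fact n * expectation (\<lambda>x. \<bar>x\<bar> ^ n)" for n
  have integrable_abs_power: "integrable M (\<lambda>x. \<bar>x\<bar> ^ n)" for n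
    using integrable_abs_power_exp[of 0 n 0] by simp
  have "summable a"
  proof (rule summableI_nonneg_bounded)
    show "0 \<le> a n" for n
      unfolding a_def by (intro mult_nonneg_nonneg integral_nonneg_AE) auto
    fix N
    have "(\<Sum>n<N. a n) = expectation (\<lambda>x. \<Sum>n<N. \<bar>t * x\<bar> ^ n / fact n)"
      unfolding a_def using integrable_abs_power
      by (simp add: Bochner_Integration.integral_sum abs_mult power_mult_distrib mult_ac)
    also have "\<dots> \<le> expectation (\<lambda>x. exp \<bar>t * x\<bar>)"
      using integrable_abs_power integrable_abs_power_exp[of "\<bar>t\<bar>" 0 0]
      by (intro integral_mono sum_power_div_fact_le_exp)
         (auto simp: abs_mult power_mult_distrib)
    finally show "(\<Sum>n<N. a n) \<le> expectation (\<lambda>x. exp \<bar>t * x\<bar>)" .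
  qed
  then have "a \<longlonglongrightarrow> 0"
    by (rule summable_LIMSEQ_zero)
  have "(\<lambda>n. char M t - (\<Sum>k\<le>n. (\<i> * t) ^ k / fact k * complex_of_real (tilted_moment M k 0))) \<longlonglongrightarrow> 0"
  proof (rule Lim_null_comparison)
    show "\<forall>\<^sub>F n in sequentially.
        norm (char M t - (\<Sum>k\<le>n. (\<i> * t) ^ k / fact k * complex_of_real (tilted_moment M k 0))) \<le> 2 * a n"
      using char_approx1[of _ t] integrable_power_exp[of _ 0]
      by (intro always_eventually allI) (simp add: tilted_moment_def a_def mult.assoc)
    show "(\<lambda>n. 2 * a n) \<longlonglongrightarrow> 0"
      using tendsto_mult_right_zero[OF \<open>a \<longlonglongrightarrow> 0\<close>] by simp
  qed
  then show ?thesis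
    unfolding sums_def_le by (rule Lim_transform2[rotated]) (rule tendsto_const)
qed

end

lemma tilted_moment_eq_of_exp_moments:
  fixes M N :: "real measure"
  assumes "exp_moments M" "exp_moments N"
    and "\<And>b. (\<integral>x. exp (b * x) \<partial>M) = (\<integral>x. exp (b * x) \<partial>N)"
  shows "tilted_moment M k = tilted_moment N k"
proof (induction k)
  case 0
  then show ?case
    using assms(3) by (simp add: tilted_moment_def fun_eq_iff)
next
  case (Suc k)
  show ?case
  proof
    fix b
    from has_real_derivative_tilted_moment[OF assms(1), of k b]
      has_real_derivative_tilted_moment[OF assms(2), of k b] Suc
    show "tilted_moment M (Suc k) b = tilted_moment N (Suc k) b"
      using DERIV_unique by metis
  qed
qed

lemma real_distribution_eqI_exp_moments:
  assumes "real_distribution M" "real_distribution N" "exp_moments M" "exp_moments N"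
    and "\<And>b. (\<integral>x. exp (b * x) \<partial>M) = (\<integral>x. exp (b * x) \<partial>N)"
  shows "M = N"
proof (rule Levy_uniqueness[OF assms(1,2)])
  show "char M = char N"
  proof
    fix t
    show "char M t = char N t"
      using moment_series_sums_char[OF assms(3,1), of t]
        moment_series_sums_char[OF assms(4,2), of t]
      by (simp add: tilted_moment_eq_of_exp_moments[OF assms(3-5)] sums_unique2)
  qed
qed

lemma
  fixes M :: "real measure"
  assumes "exp_moments M" "emeasure M (space M) = ennreal m" "0 < m"
  shows real_distribution_density_normalize: "real_distribution (density M (\<lambda>_. ennreal (1 / m)))"
    and exp_moments_density_normalize: "exp_moments (density M (\<lambda>_. ennreal (1 / m)))"
proof -
  interpret exp_moments M by fact
  have "emeasure (density M (\<lambda>_. ennreal (1 / m))) (space M) = 1"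
    using assms(2,3) by (simp add: emeasure_density_const ennreal_mult'[symmetric])
  then show "real_distribution (density M (\<lambda>_. ennreal (1 / m)))"
    by (intro real_distribution.intro real_distribution_axioms.intro prob_spaceI) (simp_all add: sets_eq_borel)
  then interpret real_distribution "density M (\<lambda>_. ennreal (1 / m))" .
  show "exp_moments (density M (\<lambda>_. ennreal (1 / m)))"
    using integrable_exp assms(3)
    by (intro exp_moments.intro finite_measure_axioms) (simp_all add: integrable_density sets_eq_borel)
qed

lemma exp_moments_eqI_real:
  fixes M N :: "real measure"
  assumes M: "exp_moments M" and N: "exp_moments N"
    and eq: "\<And>b. (\<integral>x. exp (b * x) \<partial>M) = (\<integral>x. exp (b * x) \<partial>N)"
  shows "M = N"
proof -
  interpret M: exp_moments M by fact
  interpret N: exp_moments N by fact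
  define m where "m = (\<integral>x. exp (0 * x) \<partial>M)"
  have "0 \<le> m"
    unfolding m_def by simp
  have space_M: "emeasure M (space M) = m" and space_N: "emeasure N (space N) = m"
    using M.emeasure_space_eq_integral_exp_zero N.emeasure_space_eq_integral_exp_zero eq[of 0]
    by (simp_all add: m_def)
  show ?thesis
  proof (cases "m = 0")
    case True
    have "emeasure M A = 0" "emeasure N A = 0" if "A \<in> sets borel" for A
      using emeasure_space[of M A] emeasure_space[of N A] space_M space_N True by simp_all
    then show ?thesis
      by (intro measure_eqI) (simp_all add: M.sets_eq_borel N.sets_eq_borel)
  next
    case False
    with \<open>0 \<le> m\<close> have "0 < m"
      by simp
    have "density M (\<lambda>_. ennreal (1 / m)) = density N (\<lambda>_. ennreal (1 / m))"
      using M N space_M space_N \<open>0 < m\<close> eq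
      by (intro real_distribution_eqI_exp_moments real_distribution_density_normalize
          exp_moments_density_normalize) (simp_all add: integral_density)
    then have "ennreal (1 / m) * emeasure M A = ennreal (1 / m) * emeasure N A" if "A \<in> sets borel" for A
      using that by (metis emeasure_density_const M.sets_eq_borel N.sets_eq_borel)
    then show ?thesis
      using \<open>0 < m\<close>
      by (intro measure_eqI) (simp_all add: M.sets_eq_borel N.sets_eq_borel ennreal_mult_cancel_left)
  qed
qed

section \<open>Exponential moments on ordered Euclidean spaces\<close>

lemma finite_measure_density_integrable:
  assumes "integrable M f" "\<And>x. 0 \<le> f x"
  shows "finite_measure (density M f)"
proof
  have "emeasure (density M f) (space (density M f)) = (\<integral>\<^sup>+ x. ennreal (f x) \<partial>M)"
    using assms(1) by (simp add: emeasure_density)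
  also have "\<dots> = ennreal (\<integral>x. f x \<partial>M)"
    using assms by (intro nn_integral_eq_integral) auto
  finally show "emeasure (density M f) (space (density M f)) \<noteq> \<infinity>"
    by simp
qed

lemma integral_distr_density:
  fixes M :: "'b measure" and Y :: "'b \<Rightarrow> 'a::euclidean_space"
  assumes "Y \<in> borel_measurable M" "\<rho> \<in> borel_measurable M" "\<And>x. 0 \<le> \<rho> x"
    and "g \<in> borel_measurable borel"
  shows "(\<integral>y. g y \<partial>distr (density M \<rho>) borel Y) = (\<integral>x. \<rho> x * g (Y x) \<partial>M)"
  using assms by (simp add: integral_distr integral_density)

lemma exp_moments_distr:
  assumes "finite_measure M" and [measurable]: "Y \<in> borel_measurable M"
    and "\<And>a. integrable M (\<lambda>x. exp (a \<bullet> Y x))"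
  shows "exp_moments (distr M borel Y)"
  using assms by (intro exp_moments.intro finite_measure.finite_measure_distr) (simp_all add: integrable_distr_eq)

lemma exp_moments_distr_density:
  fixes M :: "'b measure" and Y :: "'b \<Rightarrow> 'a::euclidean_space"
  assumes [measurable]: "Y \<in> borel_measurable M" "\<rho> \<in> borel_measurable M"
    and nonneg: "\<And>x. 0 \<le> \<rho> x"
    and integrable: "\<And>a. integrable M (\<lambda>x. \<rho> x * exp (a \<bullet> Y x))"
  shows "exp_moments (distr (density M \<rho>) borel Y)"
proof (rule exp_moments_distr)
  show "finite_measure (density M \<rho>)"
    using integrable[of 0] nonneg by (intro finite_measure_density_integrable) simp_all
  show "integrable (density M \<rho>) (\<lambda>x. exp (a \<bullet> Y x))" for a
    using integrable nonneg by (simp add: integrable_density)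
qed simp

(* The marginal of u \<bullet> x under the measure tilted by exp (a \<bullet> x) on A has the exponential moments
   b |-> integral of exp ((a + b *\<^sub>R u) \<bullet> x) over A, which agree for \<mu> and \<nu> by hypothesis. *)
lemma exp_moments_integral_cut_halfspace_eq:
  fixes \<mu> \<nu> :: "'a::euclidean_space measure"
  assumes \<mu>: "exp_moments \<mu>" and \<nu>: "exp_moments \<nu>" and A [measurable]: "A \<in> sets borel"
    and eq: "\<And>a. (\<integral>x. exp (a \<bullet> x) * indicator A x \<partial>\<mu>) = (\<integral>x. exp (a \<bullet> x) * indicator A x \<partial>\<nu>)"
  shows "(\<integral>x. exp (a \<bullet> x) * indicator (A \<inter> {x. u \<bullet> x \<le> c}) x \<partial>\<mu>)
       = (\<integral>x. exp (a \<bullet> x) * indicator (A \<inter> {x. u \<bullet> x \<le> c}) x \<partial>\<nu>)"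
proof -
  define w where "w x = exp (a \<bullet> x) * indicator A x" for x
  define marginal where "marginal K = distr (density K w) borel (\<lambda>x. u \<bullet> x)" for K :: "'a measure"
  have tilt: "w x * exp (b * (u \<bullet> x)) = exp ((a + b *\<^sub>R u) \<bullet> x) * indicator A x" for b x
    by (simp add: w_def inner_add_left exp_add mult_ac)
  have integral_marginal: "(\<integral>y. g y \<partial>marginal K) = (\<integral>x. w x * g (u \<bullet> x) \<partial>K)"
    if "exp_moments K" "g \<in> borel_measurable borel" for K g
  proof -
    interpret K: exp_moments K by fact
    show ?thesis
      unfolding marginal_def using that(2) by (intro integral_distr_density) (auto simp: w_def)
  qed
  have marginal_exp_moments: "exp_moments (marginal K)" if "exp_moments K" for K
  proof -
    interpret K: exp_moments K by fact
    have "integrable K (\<lambda>x. w x * exp (b * (u \<bullet> x)))" for b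
      unfolding tilt by (intro integrable_real_mult_indicator K.integrable_exp) measurable
    then show ?thesis
      unfolding marginal_def by (intro exp_moments_distr_density) (auto simp: w_def)
  qed
  have "marginal \<mu> = marginal \<nu>"
    using \<mu> \<nu> by (intro exp_moments_eqI_real marginal_exp_moments)
      (simp_all add: integral_marginal tilt eq)
  have indicator_measurable: "(indicator {..c} :: real \<Rightarrow> real) \<in> borel_measurable borel"
    by measurable
  have cut: "w x * indicator {..c} (u \<bullet> x) = exp (a \<bullet> x) * indicator (A \<inter> {x. u \<bullet> x \<le> c}) x" for x
    by (simp add: w_def split: split_indicator)
  have "(\<integral>x. w x * indicator {..c} (u \<bullet> x) \<partial>\<mu>) = (\<integral>y. indicator {..c} y \<partial>marginal \<mu>)"
    by (rule integral_marginal[OF \<mu> indicator_measurable, symmetric])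
  also have "\<dots> = (\<integral>x. w x * indicator {..c} (u \<bullet> x) \<partial>\<nu>)"
    unfolding \<open>marginal \<mu> = marginal \<nu>\<close> by (rule integral_marginal[OF \<nu> indicator_measurable])
  finally show ?thesis
    unfolding cut .
qed

lemma exp_moments_integral_box_eq:
  fixes \<mu> \<nu> :: "'a::euclidean_space measure"
  assumes "exp_moments \<mu>" "exp_moments \<nu>"
    and eq: "\<And>a. (\<integral>x. exp (a \<bullet> x) \<partial>\<mu>) = (\<integral>x. exp (a \<bullet> x) \<partial>\<nu>)"
    and "finite J"
  shows "(\<integral>x. exp (a \<bullet> x) * indicator {x. \<forall>i\<in>J. x \<bullet> i \<le> b \<bullet> i} x \<partial>\<mu>)
       = (\<integral>x. exp (a \<bullet> x) * indicator {x. \<forall>i\<in>J. x \<bullet> i \<le> b \<bullet> i} x \<partial>\<nu>)"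
  using \<open>finite J\<close>
proof (induction J arbitrary: a rule: finite_induct)
  case empty
  then show ?case
    using eq by simp
next
  case (insert i J)
  have "{x. \<forall>j\<in>insert i J. x \<bullet> j \<le> b \<bullet> j} = {x. \<forall>j\<in>J. x \<bullet> j \<le> b \<bullet> j} \<inter> {x. i \<bullet> x \<le> b \<bullet> i}"
    by (auto simp: inner_commute)
  moreover have "{x. \<forall>j\<in>J. x \<bullet> j \<le> b \<bullet> j} \<in> sets borel"
    using insert.hyps(1) by measurable
  ultimately show ?case
    using exp_moments_integral_cut_halfspace_eq[OF assms(1,2) _ insert.IH] by simp
qed

lemma sets_borel_eq_sigma_sets_UNIV_atMost:
  "sets (borel :: 'a::ordered_euclidean_space measure) = sigma_sets UNIV (insert UNIV (range atMost))"
proof -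
  have "sigma_sets UNIV (insert UNIV (range atMost)) = sigma_sets UNIV (range (atMost :: 'a \<Rightarrow> _))"
    by (intro sigma_sets_eqI) (auto intro: sigma_sets_top)
  then show ?thesis
    by (subst borel_eq_atMost) simp
qed

lemma exp_moments_eqI:
  fixes \<mu> \<nu> :: "'a::ordered_euclidean_space measure"
  assumes \<mu>: "exp_moments \<mu>" and \<nu>: "exp_moments \<nu>"
    and eq: "\<And>a. (\<integral>x. exp (a \<bullet> x) \<partial>\<mu>) = (\<integral>x. exp (a \<bullet> x) \<partial>\<nu>)"
  shows "\<mu> = \<nu>"
proof -
  interpret \<mu>: exp_moments \<mu> by fact
  interpret \<nu>: exp_moments \<nu> by fact
  have "emeasure \<mu> A = emeasure \<nu> A" if "A \<in> insert UNIV (range atMost)" for A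
  proof -
    have "\<exists>J b. finite J \<and> A = {x. \<forall>i\<in>J. x \<bullet> i \<le> b \<bullet> i}"
      using that by (auto simp: eucl_le[where 'a='a] atMost_def) (use finite_Basis in blast)
    then obtain J b where "finite J" and A: "A = {x. \<forall>i\<in>J. x \<bullet> i \<le> b \<bullet> i}"
      by blast
    have [measurable]: "A \<in> sets borel"
      unfolding A using \<open>finite J\<close> by measurable
    have "space \<mu> = UNIV" "space \<nu> = UNIV"
      using sets_eq_imp_space_eq[OF \<mu>.sets_eq_borel] sets_eq_imp_space_eq[OF \<nu>.sets_eq_borel] by simp_all
    then have "measure \<mu> A = measure \<nu> A"
      using exp_moments_integral_box_eq[OF \<mu> \<nu> eq \<open>finite J\<close>, of 0 b] A by simp
    then show ?thesis
      using \<mu>.finite_measure \<nu>.finite_measure by (simp add: finite_measure.emeasure_eq_measure)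
  qed
  moreover note sets_borel_eq_sigma_sets_UNIV_atMost
  moreover have "Int_stable (insert UNIV (range (atMost :: 'a \<Rightarrow> _)))"
  proof (rule Int_stableI)
    have "{..a} \<inter> {..b} = {..inf a b}" for a b :: 'a
      by auto
    then show "A \<inter> B \<in> insert UNIV (range atMost)"
      if "A \<in> insert UNIV (range atMost)" "B \<in> insert UNIV (range atMost)" for A B :: "'a set"
      using that by auto
  qed
  ultimately show ?thesis
    using \<mu>.sets_eq_borel \<nu>.sets_eq_borel \<nu>.finite_measure
    by (intro measure_eqI_generator_eq_countable[where A="{UNIV}" and E="insert UNIV (range atMost)"])
       (auto simp: finite_measure.emeasure_finite)
qed

section \<open>Gaussian random variables and the Cameron--Martin formula\<close>

lemma normal_density_mult_exp:
  assumes "0 < \<sigma>"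
  shows "normal_density 0 \<sigma> x * exp x = exp (\<sigma>\<^sup>2 / 2) * normal_density (\<sigma>\<^sup>2) \<sigma> x"
proof -
  have "- x\<^sup>2 / (2 * \<sigma>\<^sup>2) + x = - (x - \<sigma>\<^sup>2)\<^sup>2 / (2 * \<sigma>\<^sup>2) + \<sigma>\<^sup>2 / 2"
    using assms by (simp add: field_simps power2_eq_square)
  then show ?thesis
    unfolding normal_density_def by (simp add: exp_add[symmetric] mult.commute mult.left_commute)
qed

lemma centered_gaussian_process_sum:
  assumes "centered_gaussian_process M I X" "finite K" "\<And>k. k \<in> K \<Longrightarrow> u k \<in> I"
  shows "centered_gaussian_rv M (\<lambda>\<omega>. \<Sum>k\<in>K. a k * X (u k) \<omega>)"
proof -
  define c where "c t = (\<Sum>k\<in>{k\<in>K. u k = t}. a k)" for t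
  have "(\<Sum>t\<in>u ` K. c t * X t \<omega>) = (\<Sum>k\<in>K. a k * X (u k) \<omega>)" for \<omega>
  proof -
    have "(\<Sum>t\<in>u ` K. c t * X t \<omega>) = (\<Sum>t\<in>u ` K. \<Sum>k\<in>{k\<in>K. u k = t}. a k * X (u k) \<omega>)"
      unfolding c_def sum_distrib_right by (intro sum.cong refl) auto
    also have "\<dots> = (\<Sum>k\<in>K. a k * X (u k) \<omega>)"
      using sum.image_gen[OF assms(2), of "\<lambda>k. a k * X (u k) \<omega>" u] by simp
    finally show ?thesis .
  qed
  moreover have "centered_gaussian_rv M (\<lambda>\<omega>. \<Sum>t\<in>u ` K. c t * X t \<omega>)"
    using assms unfolding centered_gaussian_process_def by blast
  ultimately show ?thesis
    by simp
qed

context prob_space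
begin

lemma
  assumes "centered_gaussian_rv M W"
  shows centered_gaussian_rv_integrable_square: "integrable M (\<lambda>\<omega>. (W \<omega>)\<^sup>2)"
    and centered_gaussian_rv_integrable_exp: "integrable M (\<lambda>\<omega>. exp (W \<omega>))"
    and centered_gaussian_rv_expectation_exp:
      "(\<integral>\<omega>. exp (W \<omega>) \<partial>M) = exp ((\<integral>\<omega>. (W \<omega>)\<^sup>2 \<partial>M) / 2)"
proof -
  have [measurable]: "W \<in> borel_measurable M"
    using assms unfolding centered_gaussian_rv_def by simp
  consider (degenerate) "AE \<omega> in M. W \<omega> = 0"
    | (normal) \<sigma> where "0 < \<sigma>" "distributed M lborel W (normal_density 0 \<sigma>)"
    using assms unfolding centered_gaussian_rv_def by blast
  then have "integrable M (\<lambda>\<omega>. (W \<omega>)\<^sup>2) \<and> integrable M (\<lambda>\<omega>. exp (W \<omega>)) \<and>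
      (\<integral>\<omega>. exp (W \<omega>) \<partial>M) = exp ((\<integral>\<omega>. (W \<omega>)\<^sup>2 \<partial>M) / 2)"
  proof cases
    case degenerate
    have "AE \<omega> in M. (W \<omega>)\<^sup>2 = 0" "AE \<omega> in M. exp (W \<omega>) = 1"
      using degenerate by auto
    then show ?thesis
      by (simp add: integrable_cong_AE[where g="\<lambda>_. 0"] integrable_cong_AE[where g="\<lambda>_. 1"]
          integral_cong_AE[where g="\<lambda>_. 0"] integral_cong_AE[where g="\<lambda>_. 1"] prob_space)
  next
    case normal
    note distributed = \<open>distributed M lborel W (normal_density 0 \<sigma>)\<close>
    have "integrable lborel (\<lambda>x. normal_density 0 \<sigma> x * x\<^sup>2)"
      using integrable_normal_moment[of \<sigma> 0 2] normal(1) by simp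
    moreover have "integrable lborel (\<lambda>x. normal_density 0 \<sigma> x * exp x)"
      unfolding normal_density_mult_exp[OF normal(1)] using normal(1) by simp
    moreover have "(\<integral>\<omega>. (W \<omega>)\<^sup>2 \<partial>M) = \<sigma>\<^sup>2"
      using normal_distributed_variance[OF normal] normal_distributed_expectation[OF normal] by simp
    moreover have "(\<integral>x. normal_density 0 \<sigma> x * exp x \<partial>lborel) = exp (\<sigma>\<^sup>2 / 2)"
      unfolding normal_density_mult_exp[OF normal(1)] using normal(1) by simp
    ultimately show ?thesis
      using distributed_integrable[OF distributed, of "\<lambda>x. x\<^sup>2"]
        distributed_integrable[OF distributed, of exp] distributed_integral[OF distributed, of exp]
      by simp
  qed
  then show "integrable M (\<lambda>\<omega>. (W \<omega>)\<^sup>2)" "integrable M (\<lambda>\<omega>. exp (W \<omega>))"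
    "(\<integral>\<omega>. exp (W \<omega>) \<partial>M) = exp ((\<integral>\<omega>. (W \<omega>)\<^sup>2 \<partial>M) / 2)"
    by auto
qed

lemma integrable_mult_of_integrable_squares:
  fixes U V :: "'a \<Rightarrow> real"
  assumes [measurable]: "U \<in> borel_measurable M" "V \<in> borel_measurable M"
    and "integrable M (\<lambda>\<omega>. (U \<omega>)\<^sup>2)" "integrable M (\<lambda>\<omega>. (V \<omega>)\<^sup>2)"
  shows "integrable M (\<lambda>\<omega>. U \<omega> * V \<omega>)"
proof (rule Bochner_Integration.integrable_bound)
  show "integrable M (\<lambda>\<omega>. (U \<omega>)\<^sup>2 + (V \<omega>)\<^sup>2)"
    using assms(3,4) by simp
  have "\<bar>U \<omega> * V \<omega>\<bar> \<le> (U \<omega>)\<^sup>2 + (V \<omega>)\<^sup>2" for \<omega>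
  proof -
    have "2 * (\<bar>U \<omega>\<bar> * \<bar>V \<omega>\<bar>) \<le> (U \<omega>)\<^sup>2 + (V \<omega>)\<^sup>2"
      using sum_squares_bound[of "\<bar>U \<omega>\<bar>" "\<bar>V \<omega>\<bar>"] by (simp add: mult.assoc)
    moreover have "0 \<le> \<bar>U \<omega>\<bar> * \<bar>V \<omega>\<bar>"
      by simp
    ultimately show ?thesis
      unfolding abs_mult by linarith
  qed
  then show "AE \<omega> in M. norm (U \<omega> * V \<omega>) \<le> norm ((U \<omega>)\<^sup>2 + (V \<omega>)\<^sup>2)"
    by simp
qed measurable

lemma expectation_exp_jointly_gaussian:
  fixes Y :: "'a \<Rightarrow> 'b::euclidean_space" and Z :: "'a \<Rightarrow> real"
  assumes [measurable]: "Y \<in> borel_measurable M" "Z \<in> borel_measurable M"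
    and gaussian: "\<And>a \<beta>. centered_gaussian_rv M (\<lambda>\<omega>. a \<bullet> Y \<omega> + \<beta> * Z \<omega>)"
    and covariance: "\<And>a. (\<integral>\<omega>. (a \<bullet> Y \<omega>) * Z \<omega> \<partial>M) = a \<bullet> c"
  shows "(\<integral>\<omega>. exp (a \<bullet> Y \<omega> + Z \<omega>) \<partial>M)
    = exp (((\<integral>\<omega>. (a \<bullet> Y \<omega>)\<^sup>2 \<partial>M) + (\<integral>\<omega>. (Z \<omega>)\<^sup>2 \<partial>M) + 2 * (a \<bullet> c)) / 2)"
proof -
  have "integrable M (\<lambda>\<omega>. (a \<bullet> Y \<omega>)\<^sup>2)" "integrable M (\<lambda>\<omega>. (Z \<omega>)\<^sup>2)"
    using centered_gaussian_rv_integrable_square gaussian[of a 0] gaussian[of 0 1] by simp_all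
  moreover from this have "integrable M (\<lambda>\<omega>. (a \<bullet> Y \<omega>) * Z \<omega>)"
    by (intro integrable_mult_of_integrable_squares) simp_all
  ultimately have "(\<integral>\<omega>. (a \<bullet> Y \<omega>)\<^sup>2 + (Z \<omega>)\<^sup>2 + 2 * ((a \<bullet> Y \<omega>) * Z \<omega>) \<partial>M)
      = (\<integral>\<omega>. (a \<bullet> Y \<omega>)\<^sup>2 \<partial>M) + (\<integral>\<omega>. (Z \<omega>)\<^sup>2 \<partial>M) + 2 * (\<integral>\<omega>. (a \<bullet> Y \<omega>) * Z \<omega> \<partial>M)"
    by simp
  then have "(\<integral>\<omega>. (a \<bullet> Y \<omega> + Z \<omega>)\<^sup>2 \<partial>M)
      = (\<integral>\<omega>. (a \<bullet> Y \<omega>)\<^sup>2 \<partial>M) + (\<integral>\<omega>. (Z \<omega>)\<^sup>2 \<partial>M) + 2 * (a \<bullet> c)"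
    unfolding covariance by (simp add: power2_sum mult.assoc)
  then show ?thesis
    using centered_gaussian_rv_expectation_exp[OF gaussian[of a 1]] by simp
qed

lemma cameron_martin_distr:
  fixes Y :: "'a \<Rightarrow> 'b::ordered_euclidean_space" and Z :: "'a \<Rightarrow> real"
  assumes [measurable]: "Y \<in> borel_measurable M" "Z \<in> borel_measurable M"
    and gaussian: "\<And>a \<beta>. centered_gaussian_rv M (\<lambda>\<omega>. a \<bullet> Y \<omega> + \<beta> * Z \<omega>)"
    and covariance: "\<And>a. (\<integral>\<omega>. (a \<bullet> Y \<omega>) * Z \<omega> \<partial>M) = a \<bullet> c"
  shows "distr (density M (\<lambda>\<omega>. exp (Z \<omega> - (\<integral>\<omega>. (Z \<omega>)\<^sup>2 \<partial>M) / 2))) borel Y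
       = distr M borel (\<lambda>\<omega>. Y \<omega> + c)"
proof -
  define v where "v = (\<integral>\<omega>. (Z \<omega>)\<^sup>2 \<partial>M)"
  have gaussian_Y: "centered_gaussian_rv M (\<lambda>\<omega>. a \<bullet> Y \<omega>)" for a
    using gaussian[of a 0] by simp
  have tilt: "exp (Z \<omega> - v / 2) * exp (a \<bullet> Y \<omega>) = exp (- v / 2) * exp (a \<bullet> Y \<omega> + Z \<omega>)" for a \<omega>
    by (simp add: exp_add[symmetric] algebra_simps)
  have exp_YZ: "(\<integral>\<omega>. exp (a \<bullet> Y \<omega> + Z \<omega>) \<partial>M) = exp (((\<integral>\<omega>. (a \<bullet> Y \<omega>)\<^sup>2 \<partial>M) + v + 2 * (a \<bullet> c)) / 2)"
    for a
    unfolding v_def by (rule expectation_exp_jointly_gaussian[OF assms])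
  have shift: "exp (a \<bullet> (Y \<omega> + c)) = exp (a \<bullet> c) * exp (a \<bullet> Y \<omega>)" for a \<omega>
    by (simp add: inner_add_right exp_add)
  have [measurable]: "(\<lambda>\<omega>. Y \<omega> + c) \<in> borel_measurable M"
    by measurable
  have "distr (density M (\<lambda>\<omega>. exp (Z \<omega> - v / 2))) borel Y = distr M borel (\<lambda>\<omega>. Y \<omega> + c)"
  proof (rule exp_moments_eqI)
    show "exp_moments (distr (density M (\<lambda>\<omega>. exp (Z \<omega> - v / 2))) borel Y)"
      using centered_gaussian_rv_integrable_exp[OF gaussian[of _ 1]]
      by (intro exp_moments_distr_density) (simp_all add: tilt)
    show "exp_moments (distr M borel (\<lambda>\<omega>. Y \<omega> + c))"
      using centered_gaussian_rv_integrable_exp[OF gaussian_Y]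
      by (intro exp_moments_distr finite_measure_axioms) (simp_all add: shift)
    fix a
    have "(\<integral>x. exp (a \<bullet> x) \<partial>distr (density M (\<lambda>\<omega>. exp (Z \<omega> - v / 2))) borel Y)
        = exp (- v / 2) * exp (((\<integral>\<omega>. (a \<bullet> Y \<omega>)\<^sup>2 \<partial>M) + v + 2 * (a \<bullet> c)) / 2)"
      by (simp add: integral_distr_density tilt exp_YZ)
    also have "\<dots> = exp (a \<bullet> c) * exp ((\<integral>\<omega>. (a \<bullet> Y \<omega>)\<^sup>2 \<partial>M) / 2)"
      by (simp add: exp_add[symmetric] field_simps)
    also have "\<dots> = (\<integral>x. exp (a \<bullet> x) \<partial>distr M borel (\<lambda>\<omega>. Y \<omega> + c))"
      by (simp add: integral_distr shift centered_gaussian_rv_expectation_exp[OF gaussian_Y])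
    finally show "(\<integral>x. exp (a \<bullet> x) \<partial>distr (density M (\<lambda>\<omega>. exp (Z \<omega> - v / 2))) borel Y)
        = (\<integral>x. exp (a \<bullet> x) \<partial>distr M borel (\<lambda>\<omega>. Y \<omega> + c))" .
  qed
  then show ?thesis
    by (simp add: v_def)
qed

lemma cameron_martin:
  fixes Y :: "'a \<Rightarrow> 'b::ordered_euclidean_space" and Z :: "'a \<Rightarrow> real"
  assumes [measurable]: "Y \<in> borel_measurable M" "Z \<in> borel_measurable M"
    and "\<And>a \<beta>. centered_gaussian_rv M (\<lambda>\<omega>. a \<bullet> Y \<omega> + \<beta> * Z \<omega>)"
    and "\<And>a. (\<integral>\<omega>. (a \<bullet> Y \<omega>) * Z \<omega> \<partial>M) = a \<bullet> c"
    and [measurable]: "h \<in> borel_measurable borel"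
  shows "(\<integral>\<omega>. exp (Z \<omega> - (\<integral>\<omega>. (Z \<omega>)\<^sup>2 \<partial>M) / 2) * h (Y \<omega>) \<partial>M) = (\<integral>\<omega>. h (Y \<omega> + c) \<partial>M)"
proof -
  have [measurable]: "(\<lambda>\<omega>. Y \<omega> + c) \<in> borel_measurable M"
    by measurable
  have "(\<integral>\<omega>. exp (Z \<omega> - (\<integral>\<omega>. (Z \<omega>)\<^sup>2 \<partial>M) / 2) * h (Y \<omega>) \<partial>M)
      = (\<integral>y. h y \<partial>distr (density M (\<lambda>\<omega>. exp (Z \<omega> - (\<integral>\<omega>. (Z \<omega>)\<^sup>2 \<partial>M) / 2))) borel Y)"
    by (simp add: integral_distr_density)
  also have "\<dots> = (\<integral>y. h y \<partial>distr M borel (\<lambda>\<omega>. Y \<omega> + c))"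
    unfolding cameron_martin_distr[OF assms(1-4)] ..
  also have "\<dots> = (\<integral>\<omega>. h (Y \<omega> + c) \<partial>M)"
    by (simp add: integral_distr)
  finally show ?thesis .
qed

end

section \<open>Partial derivatives along coordinate paths\<close>

lemma iterated_partials_pd: "pd i f \<in> iterated_partials f"
  by (intro iterated_partials.step iterated_partials.base)

lemma
  assumes "Cb_inf f" "g \<in> iterated_partials f"
  shows Cb_inf_differentiable: "g differentiable (at x)"
    and Cb_inf_borel_measurable: "g \<in> borel_measurable borel"
    and Cb_inf_bounded: "\<exists>B. \<forall>x. \<bar>g x\<bar> \<le> B"
proof -
  have differentiable: "\<forall>x. g differentiable (at x)" and "bounded (range g)"
    using assms unfolding Cb_inf_def by blast+
  then show "g differentiable (at x)" "\<exists>B. \<forall>x. \<bar>g x\<bar> \<le> B"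
    by (auto simp: bounded_iff)
  have "continuous_on UNIV g"
    using differentiable by (simp add: differentiable_imp_continuous_within continuous_at_imp_continuous_on)
  then show "g \<in> borel_measurable borel"
    by (rule borel_measurable_continuous_onI)
qed

lemma pd_eq_has_derivative:
  assumes "(f has_derivative F) (at x)"
  shows "pd i f x = F (axis i 1)"
proof -
  have "((\<lambda>h::real. x + h *\<^sub>R axis i 1) has_derivative (\<lambda>h. h *\<^sub>R axis i 1)) (at 0)"
    by (auto intro!: derivative_eq_intros)
  moreover have "(f has_derivative F) (at (x + 0 *\<^sub>R axis i 1))"
    using assms by simp
  ultimately have "((f \<circ> (\<lambda>h. x + h *\<^sub>R axis i 1)) has_derivative (F \<circ> (\<lambda>h. h *\<^sub>R axis i 1))) (at 0)"
    by (rule diff_chain_at)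
  moreover have "F \<circ> (\<lambda>h. h *\<^sub>R axis i 1) = (\<lambda>h. F (axis i 1) * h)"
    using has_derivative_linear[OF assms] by (auto simp: linear_scale)
  ultimately have "((\<lambda>h. f (x + h *\<^sub>R axis i 1)) has_field_derivative F (axis i 1)) (at 0)"
    by (simp only: has_field_derivative_def comp_def)
  then show ?thesis
    unfolding pd_def by (rule DERIV_imp_deriv)
qed

lemma vec_lambda_eq_sum_axis: "(\<chi> j. r j) = (\<Sum>j\<in>UNIV. r j *\<^sub>R axis j 1)"
  by (simp add: vec_eq_iff axis_def if_distrib cong: if_cong)

lemma has_real_derivative_comp_coordinates:
  fixes f :: "real^'n::finite \<Rightarrow> real" and r :: "'n \<Rightarrow> real \<Rightarrow> real" and r' :: "'n \<Rightarrow> real"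
  assumes "f differentiable (at (y + (\<chi> j. r j s)))"
    and "\<And>j. (r j has_real_derivative r' j) (at s)"
  shows "((\<lambda>s. f (y + (\<chi> j. r j s))) has_real_derivative (\<Sum>i\<in>UNIV. pd i f (y + (\<chi> j. r j s)) * r' i)) (at s)"
proof -
  obtain F where F: "(f has_derivative F) (at (y + (\<chi> j. r j s)))"
    using assms(1) by (auto simp: differentiable_def)
  have "((\<lambda>s. y + (\<chi> j. r j s)) has_derivative (\<lambda>h. \<Sum>j\<in>UNIV. (r' j * h) *\<^sub>R axis j 1)) (at s)"
    unfolding vec_lambda_eq_sum_axis using assms(2)
    by (intro derivative_eq_intros has_derivative_sum has_derivative_scaleR_left)
       (auto simp: has_field_derivative_def)
  from diff_chain_at[OF this F] have "((\<lambda>s. f (y + (\<chi> j. r j s))) has_derivative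
      (\<lambda>h. F (\<Sum>j\<in>UNIV. (r' j * h) *\<^sub>R axis j 1))) (at s)"
    by (simp add: comp_def)
  moreover have "(\<lambda>h. F (\<Sum>j\<in>UNIV. (r' j * h) *\<^sub>R axis j 1))
      = (\<lambda>h. (\<Sum>i\<in>UNIV. pd i f (y + (\<chi> j. r j s)) * r' i) * h)"
    using has_derivative_linear[OF F]
    by (simp add: linear_sum linear_scale pd_eq_has_derivative[OF F] sum_distrib_right mult_ac)
  ultimately show ?thesis
    by (simp only: has_field_derivative_def)
qed

lemma has_integral_comp_coordinates:
  fixes f :: "real^'n::finite \<Rightarrow> real" and r r' :: "'n \<Rightarrow> real \<Rightarrow> real"
  assumes "\<And>x. f differentiable (at x)" "a \<le> b" "finite S"
    and "\<And>j. continuous_on {a..b} (r j)"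
    and "\<And>j s. s \<in> {a<..<b} - S \<Longrightarrow> (r j has_real_derivative r' j s) (at s)"
  shows "((\<lambda>s. \<Sum>i\<in>UNIV. pd i f (y + (\<chi> j. r j s)) * r' i s)
    has_integral f (y + (\<chi> j. r j b)) - f (y + (\<chi> j. r j a))) {a..b}"
proof (rule fundamental_theorem_of_calculus_interior_strong[OF assms(3,2)])
  have "continuous_on UNIV f"
    using assms(1) by (simp add: differentiable_imp_continuous_within continuous_at_imp_continuous_on)
  moreover have "continuous_on {a..b} (\<lambda>s. y + (\<chi> j. r j s))"
    using assms(4) by (intro continuous_intros)
  ultimately show "continuous_on {a..b} (\<lambda>s. f (y + (\<chi> j. r j s)))"
    by (rule continuous_on_compose2) simp
  show "((\<lambda>s. f (y + (\<chi> j. r j s))) has_vector_derivative (\<Sum>i\<in>UNIV. pd i f (y + (\<chi> j. r j s)) * r' i s)) (at s)"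
    if "s \<in> {a<..<b} - S" for s
    unfolding has_real_derivative_iff_has_vector_derivative[symmetric]
    by (intro has_real_derivative_comp_coordinates assms(1) assms(5)[OF that])
qed

lemma integrable_bounded_mult:
  fixes g h :: "'a \<Rightarrow> real"
  assumes "integrable M h" "g \<in> borel_measurable M" "\<And>x. \<bar>g x\<bar> \<le> B"
  shows "integrable M (\<lambda>x. g x * h x)"
proof (rule Bochner_Integration.integrable_bound)
  show "integrable M (\<lambda>x. B * \<bar>h x\<bar>)"
    using assms(1) by simp
  have "\<bar>g x * h x\<bar> \<le> \<bar>B * \<bar>h x\<bar>\<bar>" for x
    using assms(3)[of x] abs_ge_self[of "B * \<bar>h x\<bar>"] by (simp add: abs_mult mult_right_mono)
  then show "AE x in M. norm (g x * h x) \<le> norm (B * \<bar>h x\<bar>)"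
    by simp
qed (use assms in measurable)

lemma borel_measurable_vec_lambda:
  fixes f :: "'a \<Rightarrow> 'n::finite \<Rightarrow> real"
  assumes "\<And>j. (\<lambda>x. f x j) \<in> borel_measurable M"
  shows "(\<lambda>x. \<chi> j. f x j) \<in> borel_measurable M"
proof (subst borel_measurable_euclidean_space, intro ballI)
  fix b :: "real^'n"
  assume "b \<in> Basis"
  then obtain j where "b = axis j 1"
    by (auto simp: Basis_vec_def)
  then show "(\<lambda>x. (\<chi> j. f x j) \<bullet> b) \<in> borel_measurable M"
    using assms by (simp add: inner_axis)
qed

lemma borel_measurable_finite_modification:
  fixes f g :: "'a::t1_space \<Rightarrow> real"
  assumes "f \<in> borel_measurable borel" "finite F" "\<And>x. x \<notin> F \<Longrightarrow> g x = f x"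
  shows "g \<in> borel_measurable borel"
proof -
  have "g x = f x + (\<Sum>y\<in>F. indicator {y} x * (g y - f y))" for x
    using assms(2,3) by (cases "x \<in> F") (simp_all add: indicator_def if_distrib sum.If_cases)
  then have "g = (\<lambda>x. f x + (\<Sum>y\<in>F. indicator {y} x * (g y - f y)))"
    by blast
  also have "\<dots> \<in> borel_measurable borel"
    using assms(1) by measurable
  finally show ?thesis .
qed

lemma borel_measurable_indicator_deriv:
  fixes g :: "real \<Rightarrow> real"
  assumes [measurable]: "g \<in> borel_measurable borel" "open S"
    and differentiable: "\<And>s. s \<in> S \<Longrightarrow> g differentiable (at s)"
  shows "(\<lambda>s. indicator S s * deriv g s) \<in> borel_measurable borel"
proof (rule borel_measurable_LIMSEQ_real)
  have [measurable]: "S \<in> sets borel"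
    using \<open>open S\<close> by simp
  show "(\<lambda>s. indicator S s * ((g (s + 1 / Suc n) - g s) * Suc n)) \<in> borel_measurable borel" for n
    by measurable
  show "(\<lambda>n. indicator S s * ((g (s + 1 / Suc n) - g s) * Suc n)) \<longlonglongrightarrow> indicator S s * deriv g s" for s
  proof (cases "s \<in> S")
    case True
    have "((\<lambda>h. (g (s + h) - g s) / h) \<longlongrightarrow> deriv g s) (at 0)"
      using differentiable[OF True] by (simp add: DERIV_deriv_iff_real_differentiable[symmetric] DERIV_def)
    moreover have "filterlim (\<lambda>n. 1 / real (Suc n)) (at 0) sequentially"
      by (rule filterlim_atI) (use LIMSEQ_inverse_real_of_nat in \<open>auto simp: divide_inverse\<close>)
    ultimately have "(\<lambda>n. (g (s + 1 / Suc n) - g s) / (1 / Suc n)) \<longlonglongrightarrow> deriv g s"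
      by (rule filterlim_compose)
    then show ?thesis
      using True by simp
  qed simp
qed

lemma (in sigma_finite_measure)
  fixes K :: "real \<Rightarrow> 'a \<Rightarrow> real" and D :: "real \<Rightarrow> real"
  assumes [measurable]: "(\<lambda>(s, \<omega>). K s \<omega>) \<in> borel_measurable (lborel \<Otimes>\<^sub>M M)"
    and D: "integrable lborel D"
    and K: "\<And>s. integrable M (K s)" "\<And>s. (\<integral>\<omega>. \<bar>K s \<omega>\<bar> \<partial>M) \<le> C"
  shows integrable_integral_lborel_mult: "integrable M (\<lambda>\<omega>. \<integral>s. K s \<omega> * D s \<partial>lborel)"
    and integral_integral_lborel_mult:
      "(\<integral>\<omega>. (\<integral>s. K s \<omega> * D s \<partial>lborel) \<partial>M) = (\<integral>s. (\<integral>\<omega>. K s \<omega> \<partial>M) * D s \<partial>lborel)"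
proof -
  interpret pair_sigma_finite lborel M ..
  have [measurable]: "D \<in> borel_measurable borel"
    using D by simp
  have "integrable (lborel \<Otimes>\<^sub>M M) (\<lambda>(s, \<omega>). K s \<omega> * D s)"
  proof (rule Fubini_integrable)
    have "(\<integral>\<omega>. norm (K s \<omega> * D s) \<partial>M) = \<bar>D s\<bar> * (\<integral>\<omega>. \<bar>K s \<omega>\<bar> \<partial>M)" for s
      by (simp add: abs_mult mult.commute)
    moreover have "integrable lborel (\<lambda>s. \<bar>D s\<bar> * (\<integral>\<omega>. \<bar>K s \<omega>\<bar> \<partial>M))"
    proof (rule Bochner_Integration.integrable_bound)
      show "integrable lborel (\<lambda>s. C * \<bar>D s\<bar>)"
        using D by simp
      have "\<bar>D s\<bar> * (\<integral>\<omega>. \<bar>K s \<omega>\<bar> \<partial>M) \<le> \<bar>D s\<bar> * \<bar>C\<bar>" for s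
        using K(2)[of s] abs_ge_self[of C] by (intro mult_left_mono) simp_all
      then show "AE s in lborel. norm (\<bar>D s\<bar> * (\<integral>\<omega>. \<bar>K s \<omega>\<bar> \<partial>M)) \<le> norm (C * \<bar>D s\<bar>)"
        by (intro AE_I2) (simp add: abs_mult integral_nonneg_AE mult.commute)
    qed measurable
    ultimately show "integrable lborel (\<lambda>s. \<integral>\<omega>. norm (case (s, \<omega>) of (s, \<omega>) \<Rightarrow> K s \<omega> * D s) \<partial>M)"
      by simp
    show "AE s in lborel. integrable M (\<lambda>\<omega>. case (s, \<omega>) of (s, \<omega>) \<Rightarrow> K s \<omega> * D s)"
      using K(1) by simp
  qed measurable
  then show "integrable M (\<lambda>\<omega>. \<integral>s. K s \<omega> * D s \<partial>lborel)"
    and "(\<integral>\<omega>. (\<integral>s. K s \<omega> * D s \<partial>lborel) \<partial>M) = (\<integral>s. (\<integral>\<omega>. K s \<omega> \<partial>M) * D s \<partial>lborel)"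
    using integrable_snd[of "\<lambda>s \<omega>. K s \<omega> * D s"] integral_snd[of "\<lambda>s \<omega>. K s \<omega> * D s"]
      integral_fst[of "\<lambda>s \<omega>. K s \<omega> * D s"]
    by simp_all
qed

section \<open>The Gaussian process\<close>

locale regular_gaussian_process =
  fixes M :: "'a measure" and X :: "real \<Rightarrow> 'a \<Rightarrow> real" and R :: "real \<Rightarrow> real \<Rightarrow> real"
    and ts :: "'n::finite \<Rightarrow> real"
  assumes prob_space_M: "prob_space M"
    and gaussian: "centered_gaussian_process M {0..} X"
    and jointly_measurable: "(\<lambda>(s, \<omega>). X s \<omega>) \<in> borel_measurable (restrict_space lborel {0..} \<Otimes>\<^sub>M M)"
    and X_0: "\<forall>\<omega>\<in>space M. X 0 \<omega> = 0"
    and R_def: "\<forall>s\<ge>0. \<forall>t\<ge>0. R s t = (\<integral>\<omega>. X s \<omega> * X t \<omega> \<partial>M)"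
    and R_continuous: "continuous_on ({0..} \<times> {0..}) (\<lambda>(s, t). R s t)"
    and R_differentiable: "\<forall>s t. s > 0 \<longrightarrow> t > 0 \<longrightarrow> s \<noteq> t \<longrightarrow> (\<lambda>s'. R s' t) differentiable (at s)"
    and R_deriv_L1_bound: "\<forall>T>0. \<exists>C::real. \<forall>u\<in>{0..T}.
      (\<integral>\<^sup>+ s\<in>{0..T}. ennreal \<bar>deriv (\<lambda>s'. R s' u) s\<bar> \<partial>lborel) \<le> ennreal C"
    and ts_pos: "\<forall>i. ts i > 0"
begin

sublocale prob_space M
  by (fact prob_space_M)

definition Xts :: "'a \<Rightarrow> real^'n" where
  "Xts \<omega> = (\<chi> j. X (ts j) \<omega>)"

(* For s >= 0 this is the covariance vector of Xts and X s. It is frozen at its value for s = 0 on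
   the negative half-line, so that it is continuous (hence Borel) on all of the real line. *)
definition cov_ts :: "real \<Rightarrow> real^'n" where
  "cov_ts s = (\<chi> j. R (ts j) (max 0 s))"

definition R_deriv :: "'n \<Rightarrow> real \<Rightarrow> real" where
  "R_deriv i s = deriv (\<lambda>s'. R s' (ts i)) s"

definition exp_martingale :: "real \<Rightarrow> real \<Rightarrow> 'a \<Rightarrow> real" where
  "exp_martingale lam s \<omega> = exp (lam * X s \<omega> - lam\<^sup>2 * R s s / 2)"

lemma X_measurable [measurable]: "0 \<le> s \<Longrightarrow> X s \<in> borel_measurable M"
  using gaussian unfolding centered_gaussian_process_def by auto

lemma X_max_measurable [measurable (raw)]:
  assumes [measurable]: "g \<in> borel_measurable N" "h \<in> measurable N M"
  shows "(\<lambda>z. X (max 0 (g z)) (h z)) \<in> borel_measurable N"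
proof -
  have "(\<lambda>z. (max 0 (g z), h z)) \<in> measurable N (restrict_space lborel {0..} \<Otimes>\<^sub>M M)"
    by (intro measurable_Pair measurable_restrict_space2) auto
  from measurable_compose[OF this jointly_measurable] show ?thesis
    by simp
qed

lemma Xts_measurable [measurable]: "Xts \<in> borel_measurable M"
  using ts_pos unfolding Xts_def by (intro borel_measurable_vec_lambda X_measurable) (simp add: less_imp_le)

lemma R_symmetric: "0 \<le> s \<Longrightarrow> 0 \<le> t \<Longrightarrow> R s t = R t s"
  using R_def by (simp add: mult.commute)

lemma R_diagonal: "0 \<le> s \<Longrightarrow> R s s = (\<integral>\<omega>. (X s \<omega>)\<^sup>2 \<partial>M)"
  using R_def by (simp add: power2_eq_square)

lemma R_zero_right: "0 \<le> s \<Longrightarrow> R s 0 = 0"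
proof -
  assume "0 \<le> s"
  then have "R s 0 = (\<integral>\<omega>. X s \<omega> * X 0 \<omega> \<partial>M)"
    using R_def by simp
  also have "\<dots> = 0"
    using X_0 by (simp add: Bochner_Integration.integral_cong[where g="\<lambda>_. 0"])
  finally show ?thesis .
qed

lemma continuous_on_R_max:
  "continuous_on UNIV (\<lambda>s. R (max 0 (f s)) (max 0 (g s)))"
  if "continuous_on UNIV f" "continuous_on UNIV g"
  by (rule continuous_on_compose2[OF R_continuous, where f="\<lambda>s. (max 0 (f s), max 0 (g s))", simplified])
     (auto intro!: continuous_intros that)

lemma centered_gaussian_rv_Xts_X:
  assumes "0 \<le> s"
  shows "centered_gaussian_rv M (\<lambda>\<omega>. a \<bullet> Xts \<omega> + \<beta> * X s \<omega>)"
proof -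
  define u where "u k = (case k of None \<Rightarrow> s | Some j \<Rightarrow> ts j)" for k
  define c where "c k = (case k of None \<Rightarrow> \<beta> | Some j \<Rightarrow> a $ j)" for k
  have "centered_gaussian_rv M (\<lambda>\<omega>. \<Sum>k\<in>UNIV. c k * X (u k) \<omega>)"
    using assms ts_pos
    by (intro centered_gaussian_process_sum[OF gaussian]) (auto simp: u_def less_imp_le split: option.splits)
  moreover have "(\<Sum>k\<in>UNIV. c k * X (u k) \<omega>) = a \<bullet> Xts \<omega> + \<beta> * X s \<omega>" for \<omega>
    by (simp add: UNIV_option_conv sum.reindex c_def u_def Xts_def inner_vec_def mult_ac)
  ultimately show ?thesis
    by simp
qed

lemma integrable_X_mult_X: "0 \<le> s \<Longrightarrow> 0 \<le> t \<Longrightarrow> integrable M (\<lambda>\<omega>. X s \<omega> * X t \<omega>)"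
  using centered_gaussian_rv_Xts_X[of _ 0 1]
  by (intro integrable_mult_of_integrable_squares centered_gaussian_rv_integrable_square) simp_all

lemma has_real_derivative_R_ts:
  assumes "0 < s" "s \<noteq> ts j"
  shows "((\<lambda>s. R (ts j) (max 0 s)) has_real_derivative R_deriv j s) (at s)"
proof (rule has_field_derivative_transform_within_open)
  show "((\<lambda>s'. R s' (ts j)) has_real_derivative R_deriv j s) (at s)"
    using R_differentiable assms ts_pos unfolding R_deriv_def by (simp add: DERIV_deriv_iff_real_differentiable)
  show "R s' (ts j) = R (ts j) (max 0 s')" if "s' \<in> {0<..}" for s'
    using that ts_pos R_symmetric[of s' "ts j"] by (simp add: less_imp_le)
qed (use assms in auto)

(* On {0..T}, R_deriv i is a genuine derivative except at 0 and ts i, where deriv may return an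
   arbitrary value; this is why measurability goes through a finite modification. *)
lemma borel_measurable_R_deriv:
  assumes "0 \<le> T"
  shows "(\<lambda>s. indicator {0..T} s * R_deriv i s) \<in> borel_measurable borel"
proof -
  define g where "g s = R (ts i) (max 0 s)" for s
  have deriv_g: "(g has_real_derivative R_deriv i s) (at s)" if "s \<in> {0<..} - {ts i}" for s
    using has_real_derivative_R_ts[of s i] that unfolding g_def by simp
  have "continuous_on UNIV g"
    unfolding g_def using continuous_on_R_max[of "\<lambda>_. ts i" "\<lambda>s. s"] ts_pos
    by (simp add: max_absorb2 less_imp_le)
  then have "(\<lambda>s. indicator ({0<..} - {ts i}) s * deriv g s) \<in> borel_measurable borel"
    using deriv_g by (intro borel_measurable_indicator_deriv borel_measurable_continuous_onI)
      (auto simp: real_differentiable_def)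
  then have "(\<lambda>s. indicator {0..T} s * (indicator ({0<..} - {ts i}) s * deriv g s)) \<in> borel_measurable borel"
    by measurable
  then show ?thesis
  proof (rule borel_measurable_finite_modification[where F="{0, ts i}"])
    show "indicator {0..T} s * R_deriv i s = indicator {0..T} s * (indicator ({0<..} - {ts i}) s * deriv g s)"
      if "s \<notin> {0, ts i}" for s
      using that DERIV_imp_deriv[OF deriv_g, of s] by (cases "0 < s") (auto split: split_indicator)
  qed simp
qed

lemma integrable_R_deriv:
  assumes "0 \<le> T"
  shows "integrable lborel (\<lambda>s. indicator {0..T} s * R_deriv i s)"
proof (rule integrableI_bounded)
  define T' where "T' = max T (ts i)"
  have "0 < T'" "ts i \<in> {0..T'}"
    using ts_pos[rule_format, of i] by (auto simp: T'_def less_imp_le)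
  then obtain C where C: "(\<integral>\<^sup>+ s\<in>{0..T'}. ennreal \<bar>R_deriv i s\<bar> \<partial>lborel) \<le> ennreal C"
    using R_deriv_L1_bound unfolding R_deriv_def by blast
  have "(\<integral>\<^sup>+ s. norm (indicator {0..T} s * R_deriv i s) \<partial>lborel) \<le> (\<integral>\<^sup>+ s\<in>{0..T'}. ennreal \<bar>R_deriv i s\<bar> \<partial>lborel)"
    by (intro nn_integral_mono) (auto simp: T'_def split: split_indicator)
  also have "\<dots> < \<infinity>"
    using C by (simp add: le_less_trans)
  finally show "(\<integral>\<^sup>+ s. norm (indicator {0..T} s * R_deriv i s) \<partial>lborel) < \<infinity>" .
qed (use assms borel_measurable_R_deriv in simp)

lemma exp_martingale_max_measurable [measurable (raw)]:
  assumes [measurable]: "g \<in> borel_measurable N" "h \<in> measurable N M"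
  shows "(\<lambda>z. exp_martingale lam (max 0 (g z)) (h z)) \<in> borel_measurable N"
proof -
  have "continuous_on UNIV (\<lambda>s. R (max 0 s) (max 0 s))"
    using continuous_on_R_max[of "\<lambda>s. s" "\<lambda>s. s"] by simp
  then have [measurable]: "(\<lambda>s. R (max 0 s) (max 0 s)) \<in> borel_measurable borel"
    by (rule borel_measurable_continuous_onI)
  show ?thesis
    unfolding exp_martingale_def by measurable
qed

lemma exp_martingale_nonneg: "0 \<le> exp_martingale lam s \<omega>"
  by (simp add: exp_martingale_def)

lemma
  assumes "0 \<le> s"
  shows integrable_exp_martingale: "integrable M (exp_martingale lam s)"
    and expectation_exp_martingale: "(\<integral>\<omega>. exp_martingale lam s \<omega> \<partial>M) = 1"
proof -
  have gaussian: "centered_gaussian_rv M (\<lambda>\<omega>. lam * X s \<omega>)"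
    using centered_gaussian_rv_Xts_X[OF assms, of 0 lam] by simp
  have "exp_martingale lam s = (\<lambda>\<omega>. exp (lam * X s \<omega>) / exp (lam\<^sup>2 * R s s / 2))"
    by (simp add: fun_eq_iff exp_martingale_def exp_diff)
  moreover have "(\<integral>\<omega>. exp (lam * X s \<omega>) \<partial>M) = exp (lam\<^sup>2 * R s s / 2)"
    using centered_gaussian_rv_expectation_exp[OF gaussian] R_diagonal[OF assms]
    by (simp add: power_mult_distrib)
  ultimately show "integrable M (exp_martingale lam s)" "(\<integral>\<omega>. exp_martingale lam s \<omega> \<partial>M) = 1"
    using centered_gaussian_rv_integrable_exp[OF gaussian] by simp_all
qed

lemma
  assumes "0 \<le> s" "g \<in> borel_measurable M" "\<And>\<omega>. \<bar>g \<omega>\<bar> \<le> B"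
  shows integrable_exp_martingale_mult: "integrable M (\<lambda>\<omega>. exp_martingale lam s \<omega> * g \<omega>)"
    and integral_abs_exp_martingale_mult_le: "(\<integral>\<omega>. \<bar>exp_martingale lam s \<omega> * g \<omega>\<bar> \<partial>M) \<le> B"
proof -
  have "integrable M (\<lambda>\<omega>. g \<omega> * exp_martingale lam s \<omega>)"
    using integrable_exp_martingale[OF assms(1)] assms(2,3) by (rule integrable_bounded_mult)
  then show integrable: "integrable M (\<lambda>\<omega>. exp_martingale lam s \<omega> * g \<omega>)"
    by (simp add: mult.commute)
  have "(\<integral>\<omega>. \<bar>exp_martingale lam s \<omega> * g \<omega>\<bar> \<partial>M) \<le> (\<integral>\<omega>. exp_martingale lam s \<omega> * B \<partial>M)"
    using assms(3) integrable_abs[OF integrable] integrable_exp_martingale[OF assms(1)]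
    by (intro integral_mono)
       (auto simp: abs_mult abs_of_nonneg[OF exp_martingale_nonneg] mult_left_mono exp_martingale_nonneg)
  also have "\<dots> = B"
    using expectation_exp_martingale[OF assms(1)] by simp
  finally show "(\<integral>\<omega>. \<bar>exp_martingale lam s \<omega> * g \<omega>\<bar> \<partial>M) \<le> B" .
qed

lemma cameron_martin_Xts:
  assumes "0 \<le> s" "h \<in> borel_measurable borel"
  shows "(\<integral>\<omega>. exp_martingale lam s \<omega> * h (Xts \<omega>) \<partial>M) = (\<integral>\<omega>. h (Xts \<omega> + lam *\<^sub>R cov_ts s) \<partial>M)"
proof -
  have covariance: "(\<integral>\<omega>. (a \<bullet> Xts \<omega>) * (lam * X s \<omega>) \<partial>M) = a \<bullet> (lam *\<^sub>R cov_ts s)" for a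
  proof -
    have "(\<integral>\<omega>. (a \<bullet> Xts \<omega>) * (lam * X s \<omega>) \<partial>M)
        = (\<integral>\<omega>. (\<Sum>j\<in>UNIV. a $ j * lam * (X (ts j) \<omega> * X s \<omega>)) \<partial>M)"
      by (intro Bochner_Integration.integral_cong refl) (simp add: Xts_def inner_vec_def sum_distrib_left sum_distrib_right mult_ac)
    also have "\<dots> = (\<Sum>j\<in>UNIV. a $ j * lam * (\<integral>\<omega>. X (ts j) \<omega> * X s \<omega> \<partial>M))"
      using integrable_X_mult_X[of "ts _" s] assms(1) ts_pos
      by (subst Bochner_Integration.integral_sum) (auto simp: less_imp_le)
    also have "\<dots> = a \<bullet> (lam *\<^sub>R cov_ts s)"
      using R_def assms(1) ts_pos by (simp add: cov_ts_def inner_vec_def mult_ac less_imp_le)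
    finally show ?thesis .
  qed
  have "centered_gaussian_rv M (\<lambda>\<omega>. a \<bullet> Xts \<omega> + \<beta> * (lam * X s \<omega>))" for a \<beta>
    using centered_gaussian_rv_Xts_X[OF assms(1), of a "\<beta> * lam"] by (simp add: mult.assoc)
  from cameron_martin[OF _ _ this covariance assms(2)] assms(1)
  have "(\<integral>\<omega>. exp (lam * X s \<omega> - (\<integral>\<omega>. (lam * X s \<omega>)\<^sup>2 \<partial>M) / 2) * h (Xts \<omega>) \<partial>M)
      = (\<integral>\<omega>. h (Xts \<omega> + lam *\<^sub>R cov_ts s) \<partial>M)"
    by simp
  moreover have "(\<integral>\<omega>. (lam * X s \<omega>)\<^sup>2 \<partial>M) = lam\<^sup>2 * R s s"
    using R_diagonal[OF assms(1)] by (simp add: power_mult_distrib)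
  ultimately show ?thesis
    by (simp add: exp_martingale_def)
qed

lemma cov_ts_measurable [measurable]: "cov_ts \<in> borel_measurable borel"
proof -
  have "(\<lambda>s. R (ts j) (max 0 s)) \<in> borel_measurable borel" for j
    using continuous_on_R_max[of "\<lambda>_. ts j" "\<lambda>s. s"] ts_pos
    by (intro borel_measurable_continuous_onI) (simp add: max_absorb2 less_imp_le)
  then show ?thesis
    unfolding cov_ts_def by (rule borel_measurable_vec_lambda)
qed

lemma cov_ts_max: "cov_ts (max 0 s) = cov_ts s"
  by (simp add: cov_ts_def)

lemma cov_ts_0: "cov_ts 0 = 0"
  using R_zero_right ts_pos by (simp add: cov_ts_def vec_eq_iff less_imp_le)

lemma integrable_pd_path_R_deriv:
  assumes "Cb_inf f" "0 \<le> t"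
  shows "integrable lborel (\<lambda>s. pd i f (y + lam *\<^sub>R cov_ts s) * (indicator {0..t} s * R_deriv i s))"
proof -
  obtain B where B: "\<And>x. \<bar>pd i f x\<bar> \<le> B"
    using Cb_inf_bounded[OF assms(1) iterated_partials_pd] by blast
  have [measurable]: "pd i f \<in> borel_measurable borel"
    using Cb_inf_borel_measurable[OF assms(1) iterated_partials_pd] .
  show ?thesis
    using integrable_R_deriv[OF assms(2), of i]
  proof (rule integrable_bounded_mult)
    show "(\<lambda>s. pd i f (y + lam *\<^sub>R cov_ts s)) \<in> borel_measurable lborel"
      by measurable
  qed (rule B)
qed

lemma shift_difference_eq_integral:
  assumes "Cb_inf f" "0 \<le> t"
  shows "f (y + lam *\<^sub>R cov_ts t) - f y
    = lam * (\<Sum>i\<in>UNIV. \<integral>s. pd i f (y + lam *\<^sub>R cov_ts s) * (indicator {0..t} s * R_deriv i s) \<partial>lborel)"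
proof -
  define g where "g s = (\<Sum>i\<in>UNIV. pd i f (y + lam *\<^sub>R cov_ts s) * (lam * R_deriv i s))" for s
  have path: "y + lam *\<^sub>R cov_ts s = y + (\<chi> j. lam * R (ts j) (max 0 s))" for s
    by (simp add: cov_ts_def vec_eq_iff)
  have "(g has_integral f (y + lam *\<^sub>R cov_ts t) - f (y + lam *\<^sub>R cov_ts 0)) {0..t}"
    unfolding g_def path
  proof (rule has_integral_comp_coordinates[where S="range ts"])
    fix j
    have "continuous_on UNIV (\<lambda>s. R (ts j) (max 0 s))"
      using continuous_on_R_max[of "\<lambda>_. ts j" "\<lambda>s. s"] ts_pos by (simp add: max_absorb2 less_imp_le)
    from continuous_on_subset[OF this, of "{0..t}"]
    show "continuous_on {0..t} (\<lambda>s. lam * R (ts j) (max 0 s))"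
      by (simp add: continuous_on_mult_left)
    show "((\<lambda>s. lam * R (ts j) (max 0 s)) has_real_derivative lam * R_deriv j s) (at s)"
      if "s \<in> {0<..<t} - range ts" for s
      using that by (intro DERIV_cmult has_real_derivative_R_ts) auto
  qed (use assms Cb_inf_differentiable[OF _ iterated_partials.base] in auto)
  moreover note integrable = integrable_pd_path_R_deriv[OF assms, of _ y lam]
  moreover have "indicator {0..t} s *\<^sub>R g s
      = (\<Sum>i\<in>UNIV. lam * (pd i f (y + lam *\<^sub>R cov_ts s) * (indicator {0..t} s * R_deriv i s)))" for s
    by (simp add: g_def sum_distrib_left mult_ac)
  ultimately have "f (y + lam *\<^sub>R cov_ts t) - f (y + lam *\<^sub>R cov_ts 0) = (LINT s:{0..t}|lborel. g s)"
    by (subst set_borel_integral_eq_integral)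
       (simp_all add: integral_unique set_integrable_def set_lebesgue_integral_def)
  also have "\<dots> = lam * (\<Sum>i\<in>UNIV. \<integral>s. pd i f (y + lam *\<^sub>R cov_ts s) * (indicator {0..t} s * R_deriv i s) \<partial>lborel)"
    using integrable by (simp add: set_lebesgue_integral_def g_def sum_distrib_left mult_ac)
  finally show ?thesis
    by (simp add: cov_ts_0)
qed

lemma
  assumes "Cb_inf f" "0 \<le> t"
  shows integrable_integral_pd_shift:
      "integrable M (\<lambda>\<omega>. \<integral>s. pd i f (Xts \<omega> + lam *\<^sub>R cov_ts s) * (indicator {0..t} s * R_deriv i s) \<partial>lborel)"
    and integral_integral_pd_shift:
      "(\<integral>\<omega>. (\<integral>s. pd i f (Xts \<omega> + lam *\<^sub>R cov_ts s) * (indicator {0..t} s * R_deriv i s) \<partial>lborel) \<partial>M)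
      = (\<integral>s. (\<integral>\<omega>. pd i f (Xts \<omega> + lam *\<^sub>R cov_ts s) \<partial>M) * (indicator {0..t} s * R_deriv i s) \<partial>lborel)"
proof -
  obtain B where B: "\<And>x. \<bar>pd i f x\<bar> \<le> B"
    using Cb_inf_bounded[OF assms(1) iterated_partials_pd] by blast
  have [measurable]: "pd i f \<in> borel_measurable borel"
    using Cb_inf_borel_measurable[OF assms(1) iterated_partials_pd] .
  have measurable: "(\<lambda>(s, \<omega>). pd i f (Xts \<omega> + lam *\<^sub>R cov_ts s)) \<in> borel_measurable (lborel \<Otimes>\<^sub>M M)"
    by measurable
  have integrable: "integrable M (\<lambda>\<omega>. pd i f (Xts \<omega> + lam *\<^sub>R cov_ts s))" for s
    using B by (intro integrable_const_bound[where B=B]) auto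
  have bound: "(\<integral>\<omega>. \<bar>pd i f (Xts \<omega> + lam *\<^sub>R cov_ts s)\<bar> \<partial>M) \<le> B" for s
    using B integrable by (intro integral_le_const) auto
  show "integrable M (\<lambda>\<omega>. \<integral>s. pd i f (Xts \<omega> + lam *\<^sub>R cov_ts s) * (indicator {0..t} s * R_deriv i s) \<partial>lborel)"
    by (rule integrable_integral_lborel_mult[OF measurable integrable_R_deriv[OF assms(2), of i] integrable bound])
  show "(\<integral>\<omega>. (\<integral>s. pd i f (Xts \<omega> + lam *\<^sub>R cov_ts s) * (indicator {0..t} s * R_deriv i s) \<partial>lborel) \<partial>M)
      = (\<integral>s. (\<integral>\<omega>. pd i f (Xts \<omega> + lam *\<^sub>R cov_ts s) \<partial>M) * (indicator {0..t} s * R_deriv i s) \<partial>lborel)"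
    by (rule integral_integral_lborel_mult[OF measurable integrable_R_deriv[OF assms(2), of i] integrable bound])
qed

(* On {0..t}, exp_martingale lam (max 0 s) is exp_martingale lam s; the clamp only serves joint
   measurability on lborel \<Otimes>\<^sub>M M, as X s is only known to be measurable for s >= 0. *)
lemma
  assumes "Cb_inf f" "0 \<le> t"
  shows integrable_pd_set_integral_exp_martingale:
      "integrable M (\<lambda>\<omega>. pd i f (Xts \<omega>) * (LINT s:{0..t}|lborel. exp_martingale lam s \<omega> * R_deriv i s))"
    and integral_pd_set_integral_exp_martingale:
      "(\<integral>\<omega>. pd i f (Xts \<omega>) * (LINT s:{0..t}|lborel. exp_martingale lam s \<omega> * R_deriv i s) \<partial>M)
      = (\<integral>s. (\<integral>\<omega>. exp_martingale lam (max 0 s) \<omega> * pd i f (Xts \<omega>) \<partial>M) * (indicator {0..t} s * R_deriv i s) \<partial>lborel)"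
proof -
  obtain B where B: "\<And>x. \<bar>pd i f x\<bar> \<le> B"
    using Cb_inf_bounded[OF assms(1) iterated_partials_pd] by blast
  have [measurable]: "pd i f \<in> borel_measurable borel"
    using Cb_inf_borel_measurable[OF assms(1) iterated_partials_pd] .
  have measurable: "(\<lambda>(s, \<omega>). exp_martingale lam (max 0 s) \<omega> * pd i f (Xts \<omega>)) \<in> borel_measurable (lborel \<Otimes>\<^sub>M M)"
    by measurable
  have integrable: "integrable M (\<lambda>\<omega>. exp_martingale lam (max 0 s) \<omega> * pd i f (Xts \<omega>))" for s
    using B by (intro integrable_exp_martingale_mult) simp_all
  have bound: "(\<integral>\<omega>. \<bar>exp_martingale lam (max 0 s) \<omega> * pd i f (Xts \<omega>)\<bar> \<partial>M) \<le> B" for s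
    using B by (intro integral_abs_exp_martingale_mult_le) simp_all
  have set_integral: "(\<integral>s. exp_martingale lam (max 0 s) \<omega> * pd i f (Xts \<omega>) * (indicator {0..t} s * R_deriv i s) \<partial>lborel)
      = pd i f (Xts \<omega>) * (LINT s:{0..t}|lborel. exp_martingale lam s \<omega> * R_deriv i s)" for \<omega>
  proof -
    have "(\<integral>s. exp_martingale lam (max 0 s) \<omega> * pd i f (Xts \<omega>) * (indicator {0..t} s * R_deriv i s) \<partial>lborel)
        = (\<integral>s. pd i f (Xts \<omega>) * (indicator {0..t} s *\<^sub>R (exp_martingale lam s \<omega> * R_deriv i s)) \<partial>lborel)"
      by (intro Bochner_Integration.integral_cong refl) (auto split: split_indicator)
    then show ?thesis
      unfolding set_lebesgue_integral_def by simp
  qed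
  show "integrable M (\<lambda>\<omega>. pd i f (Xts \<omega>) * (LINT s:{0..t}|lborel. exp_martingale lam s \<omega> * R_deriv i s))"
    using integrable_integral_lborel_mult[OF measurable integrable_R_deriv[OF assms(2), of i] integrable bound]
    unfolding set_integral .
  show "(\<integral>\<omega>. pd i f (Xts \<omega>) * (LINT s:{0..t}|lborel. exp_martingale lam s \<omega> * R_deriv i s) \<partial>M)
      = (\<integral>s. (\<integral>\<omega>. exp_martingale lam (max 0 s) \<omega> * pd i f (Xts \<omega>) \<partial>M) * (indicator {0..t} s * R_deriv i s) \<partial>lborel)"
    using integral_integral_lborel_mult[OF measurable integrable_R_deriv[OF assms(2), of i] integrable bound]
    unfolding set_integral .
qed

theorem integration_by_parts_exp_martingale:
  assumes "Cb_inf f" "lam \<noteq> 0" "0 \<le> t"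
  shows "(\<integral>\<omega>. f (Xts \<omega>) * ((exp_martingale lam t \<omega> - 1) / lam) \<partial>M)
    = (\<integral>\<omega>. (\<Sum>i\<in>UNIV. pd i f (Xts \<omega>) * (LINT s:{0..t}|lborel. exp_martingale lam s \<omega> * R_deriv i s)) \<partial>M)"
proof -
  obtain B where B: "\<And>x. \<bar>f x\<bar> \<le> B"
    using Cb_inf_bounded[OF assms(1) iterated_partials.base] by blast
  have [measurable]: "f \<in> borel_measurable borel"
    using Cb_inf_borel_measurable[OF assms(1) iterated_partials.base] .
  have integrable_f: "integrable M (\<lambda>\<omega>. f (Xts \<omega> + z))" for z
    using B by (intro integrable_const_bound[where B=B]) auto
  have "integrable M (\<lambda>\<omega>. exp_martingale lam t \<omega> * f (Xts \<omega>))"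
    using assms(3) B by (intro integrable_exp_martingale_mult) simp_all
  then have "(\<integral>\<omega>. f (Xts \<omega>) * ((exp_martingale lam t \<omega> - 1) / lam) \<partial>M)
      = ((\<integral>\<omega>. exp_martingale lam t \<omega> * f (Xts \<omega>) \<partial>M) - (\<integral>\<omega>. f (Xts \<omega>) \<partial>M)) / lam"
    using integrable_f[of 0] by (simp add: right_diff_distrib diff_divide_distrib mult.commute)
  also have "\<dots> = (\<integral>\<omega>. f (Xts \<omega> + lam *\<^sub>R cov_ts t) - f (Xts \<omega>) \<partial>M) / lam"
    using integrable_f[of 0] integrable_f[of "lam *\<^sub>R cov_ts t"] assms(3) by (simp add: cameron_martin_Xts)
  also have "\<dots> = (\<Sum>i\<in>UNIV. \<integral>\<omega>. (\<integral>s. pd i f (Xts \<omega> + lam *\<^sub>R cov_ts s) * (indicator {0..t} s * R_deriv i s) \<partial>lborel) \<partial>M)"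
    using assms integrable_integral_pd_shift[OF assms(1,3)]
    by (simp add: shift_difference_eq_integral Bochner_Integration.integral_sum)
  also have "\<dots> = (\<Sum>i\<in>UNIV. \<integral>s. (\<integral>\<omega>. pd i f (Xts \<omega> + lam *\<^sub>R cov_ts s) \<partial>M) * (indicator {0..t} s * R_deriv i s) \<partial>lborel)"
    using assms(1,3) by (simp add: integral_integral_pd_shift)
  also have "\<dots> = (\<Sum>i\<in>UNIV. \<integral>s. (\<integral>\<omega>. exp_martingale lam (max 0 s) \<omega> * pd i f (Xts \<omega>) \<partial>M) * (indicator {0..t} s * R_deriv i s) \<partial>lborel)"
    using Cb_inf_borel_measurable[OF assms(1) iterated_partials_pd]
    by (intro sum.cong refl Bochner_Integration.integral_cong)
       (auto simp: cameron_martin_Xts cov_ts_max split: split_indicator)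
  also have "\<dots> = (\<integral>\<omega>. (\<Sum>i\<in>UNIV. pd i f (Xts \<omega>) * (LINT s:{0..t}|lborel. exp_martingale lam s \<omega> * R_deriv i s)) \<partial>M)"
    using assms(1,3) integrable_pd_set_integral_exp_martingale
    by (simp add: integral_pd_set_integral_exp_martingale Bochner_Integration.integral_sum)
  finally show ?thesis .
qed

end

theorem proposition2p1:
  fixes M :: "'a measure" and X :: "real \<Rightarrow> 'a \<Rightarrow> real" and R :: "real \<Rightarrow> real \<Rightarrow> real"
    and lam :: real and t :: real
    and ts :: "'n::finite \<Rightarrow> real" and f :: "real^'n \<Rightarrow> real"
  assumes "prob_space M"
    and gauss: "centered_gaussian_process M {0..} X"
    and meas: "(\<lambda>(s, \<omega>). X s \<omega>) \<in> borel_measurable (restrict_space lborel {0..} \<Otimes>\<^sub>M M)"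
    and X0: "\<forall>\<omega>\<in>space M. X 0 \<omega> = 0"
    and R_def: "\<forall>s\<ge>0. \<forall>t\<ge>0. R s t = (\<integral>\<omega>. X s \<omega> * X t \<omega> \<partial>M)"
    and R_cont: "continuous_on ({0..} \<times> {0..}) (\<lambda>(s, t). R s t)"
    and R_diff: "\<forall>s t. s > 0 \<longrightarrow> t > 0 \<longrightarrow> s \<noteq> t \<longrightarrow> (\<lambda>s'. R s' t) differentiable (at s)"
    and R_bound: "\<forall>T>0. \<exists>C::real. \<forall>u\<in>{0..T}.
                    (\<integral>\<^sup>+ s\<in>{0..T}. ennreal \<bar>deriv (\<lambda>s'. R s' u) s\<bar> \<partial>lborel) \<le> ennreal C"
    and lam: "lam > 0"
    and t: "t > 0"
    and ts: "\<forall>i. ts i > 0"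
    and f: "Cb_inf f"
  shows "(\<integral>\<omega>. f (\<chi> i. X (ts i) \<omega>) * ((exp (lam * X t \<omega> - lam\<^sup>2 * R t t / 2) - 1) / lam) \<partial>M)
       = (\<integral>\<omega>. (\<Sum>i\<in>UNIV. pd i f (\<chi> j. X (ts j) \<omega>) *
              (LINT s:{0..t}|lborel. exp (lam * X s \<omega> - lam\<^sup>2 * R s s / 2) * deriv (\<lambda>s'. R s' (ts i)) s)) \<partial>M)"
proof -
  interpret regular_gaussian_process M X R ts
    by (rule regular_gaussian_process.intro) fact+
  have "lam \<noteq> 0" "0 \<le> t"
    using lam t by simp_all
  from integration_by_parts_exp_martingale[OF f this]
  show ?thesis
    unfolding Xts_def exp_martingale_def R_deriv_def .
qed

end
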